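(* Let $n,t,k$ be integers with $n\geq 2t\geq 2$ and $k\geq 2$, and let $u$ be a word of length $t$ over $\Sigma_k=\{0,1,\ldots,k-1\}$. Then \[B_k(n,u)\leq A_k(n-2t,0^t),\] where $0^t$ denotes the word consisting of $t$ zeros.
   Context: A border of a word $w$ is a non-empty word that is both a proper prefix and a proper suffix of $w$. A word $w$ is closed by a word $u$ if $u$ is a border of $w$ and $u$ occurs exactly twice in $w$ as a factor (overlapping occurrences counted). $B_k(n,u)$ denotes the number of words of length $n$ over $\Sigma_k$ that are closed by $u$. $A_k(m,v)$ denotes the number of words of length $m$ over $\Sigma_k$ that do not contain $v$ as a factor (for $m=0$ the empty word is counted). *)

theory Defs
  imports Main "HOL-Library.Sublist"
begin

definition words :: "nat \<Rightarrow> nat \<Rightarrow> nat list set" where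
  "words k n = {w. length w = n \<and> set w \<subseteq> {..<k}}"

definition occurrences :: "nat list \<Rightarrow> nat list \<Rightarrow> nat" where
  "occurrences u w = card {i. i + length u \<le> length w \<and> take (length u) (drop i w) = u}"

definition is_border :: "nat list \<Rightarrow> nat list \<Rightarrow> bool" where
  "is_border u w \<longleftrightarrow> u \<noteq> [] \<and> strict_prefix u w \<and> strict_suffix u w"

definition closed_by :: "nat list \<Rightarrow> nat list \<Rightarrow> bool" where
  "closed_by w u \<longleftrightarrow> is_border u w \<and> occurrences u w = 2"

definition B :: "nat \<Rightarrow> nat \<Rightarrow> nat list \<Rightarrow> nat" where
  "B k n u = card {w \<in> words k n. closed_by w u}"

definition A :: "nat \<Rightarrow> nat \<Rightarrow> nat list \<Rightarrow> nat" where
  "A k m v = card {w \<in> words k m. \<not> sublist v w}"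

end

theory Submission
  imports Defs "HOL-Combinatorics.Transposition"
begin

text \<open>A word of length \<open>n\<close> closed by \<open>u\<close> has the form \<open>u z u\<close> with \<open>|z| = n - 2t\<close>, and \<open>u\<close>
  occurs in it only at the two ends. Read \<open>z\<close> letter by letter, starting after the prefix \<open>u\<close>,
  while tracking the length \<open>s\<close> of the longest proper prefix of \<open>u\<close> that is a suffix of the
  text read so far, and output the letter \<open>c\<close> with \<open>u ! s\<close> and \<open>0\<close> exchanged. Since the state
  depends only on the letters already read, this encoding of \<open>z\<close> is injective. An output \<open>0\<close>
  means that \<open>c\<close> extends the current match, so \<open>t\<close> consecutive zeros would complete a third
  occurrence of \<open>u\<close> starting inside \<open>z\<close>. Hence the encoding maps the middles of closed words
  injectively into the words of length \<open>n - 2t\<close> avoiding \<open>0\<^sup>t\<close>.\<close>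

definition match_state :: "'a list \<Rightarrow> 'a list \<Rightarrow> nat" where
  "match_state u x = (GREATEST l. l < length u \<and> suffix (take l u) x)"

lemma
  assumes "u \<noteq> []"
  shows match_state_less: "match_state u x < length u"
    and match_state_suffix: "suffix (take (match_state u x) u) x"
proof -
  have "0 < length u \<and> suffix (take 0 u) x"
    using assms by simp
  then have "match_state u x < length u \<and> suffix (take (match_state u x) u) x"
    unfolding match_state_def by (rule GreatestI_nat[where b = "length u"]) simp
  then show "match_state u x < length u" "suffix (take (match_state u x) u) x"
    by simp_all
qed

lemma match_state_maximal:
  assumes "l < length u" and "suffix (take l u) x"
  shows "l \<le> match_state u x"
  unfolding match_state_def
  by (rule Greatest_le_nat[where b = "length u"]) (use assms in auto)

fun match_encode :: "nat list \<Rightarrow> nat list \<Rightarrow> nat list \<Rightarrow> nat list" where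
  "match_encode u x [] = []"
| "match_encode u x (c # cs) =
     transpose (u ! match_state u x) 0 c # match_encode u (x @ [c]) cs"

lemma length_match_encode [simp]: "length (match_encode u x cs) = length cs"
  by (induction cs arbitrary: x) auto

lemma match_encode_append:
  "match_encode u x (cs @ ds) = match_encode u x cs @ match_encode u (x @ cs) ds"
  by (induction cs arbitrary: x) auto

lemma match_encode_inj:
  assumes "length cs = length ds" and "match_encode u x cs = match_encode u x ds"
  shows "cs = ds"
  using assms
proof (induction cs arbitrary: x ds)
  case Nil
  then show ?case by simp
next
  case (Cons c cs)
  then obtain d ds' where ds: "ds = d # ds'"
    by (cases ds) auto
  with Cons.prems have "c = d"
    by (auto dest: transpose_eq_imp_eq)
  with Cons ds show ?case by auto
qed

lemma set_match_encode_subset: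
  assumes "u \<noteq> []" and "set u \<subseteq> {..<k}" and "set cs \<subseteq> {..<k}"
  shows "set (match_encode u x cs) \<subseteq> {..<k}"
  using assms(3)
proof (induction cs arbitrary: x)
  case Nil
  then show ?case by simp
next
  case (Cons c cs)
  have "u ! match_state u x < k"
    using assms(1,2) match_state_less nth_mem by blast
  with Cons show ?case
    by (auto simp: transpose_def)
qed

lemma match_encode_zero_run:
  assumes "u \<noteq> []" and "prefix (replicate r 0) (match_encode u x cs)"
  shows "(\<exists>i. 1 \<le> i \<and> i \<le> r \<and> suffix u (x @ take i cs))
    \<or> match_state u x + r \<le> match_state u (x @ take r cs)"
  using assms(2)
proof (induction r arbitrary: x cs)
  case 0
  then show ?case by simp
next
  case (Suc r)
  then obtain c cs' where cs: "cs = c # cs'"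
    by (cases cs) auto
  let ?s = "match_state u x"
  from Suc.prems cs have c: "c = u ! ?s"
    and zeros: "prefix (replicate r 0) (match_encode u (x @ [c]) cs')"
    by (auto simp: transpose_eq_iff)
  have extended: "suffix (take (Suc ?s) u) (x @ [c])"
    using match_state_less[OF assms(1)] match_state_suffix[OF assms(1)] c
    by (simp add: take_Suc_conv_app_nth)
  show ?case
  proof (cases "Suc ?s = length u")
    case True
    with extended cs have "suffix u (x @ take 1 cs)"
      by simp
    then show ?thesis by auto
  next
    case False
    with match_state_less[OF assms(1)] have "Suc ?s < length u"
      by (simp add: Suc_lessI)
    then have step: "Suc ?s \<le> match_state u (x @ [c])"
      using extended by (rule match_state_maximal)
    from Suc.IH[OF zeros] show ?thesis
    proof
      assume "\<exists>i. 1 \<le> i \<and> i \<le> r \<and> suffix u ((x @ [c]) @ take i cs')"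
      then obtain i where "1 \<le> i" "i \<le> r" "suffix u ((x @ [c]) @ take i cs')"
        by blast
      with cs show ?thesis
        by (intro disjI1 exI[of _ "Suc i"]) auto
    next
      assume "match_state u (x @ [c]) + r \<le> match_state u ((x @ [c]) @ take r cs')"
      with step cs show ?thesis by auto
    qed
  qed
qed

lemma match_encode_zeros_imp_occurrence:
  assumes "u \<noteq> []" and "prefix (replicate (length u) 0) (match_encode u x cs)"
  obtains i where "1 \<le> i" "i \<le> length u" "suffix u (x @ take i cs)"
  using match_encode_zero_run[OF assms] match_state_less[OF assms(1), of "x @ take (length u) cs"]
  by fastforce

lemma card_le_occurrences:
  assumes "\<And>i. i \<in> P \<Longrightarrow> i + length u \<le> length w \<and> take (length u) (drop i w) = u"
  shows "card P \<le> occurrences u w"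
  unfolding occurrences_def
proof (rule card_mono)
  show "finite {i. i + length u \<le> length w \<and> take (length u) (drop i w) = u}"
    by (rule finite_subset[of _ "{..length w}"]) auto
qed (use assms in blast)

lemma inner_occurrence_imp_occurrences_ge_3:
  assumes "u \<noteq> []" and "1 \<le> q" "q \<le> length z" and "suffix u (u @ take q z)"
  shows "3 \<le> occurrences u (u @ z @ u)"
proof -
  let ?w = "u @ z @ u"
  obtain p where p: "u @ take q z = p @ u"
    using assms(4) suffix_def by blast
  have "length p = q"
    using arg_cong[OF p, of length] assms(3) by simp
  have "?w = (u @ take q z) @ drop q z @ u"
    by simp
  also have "\<dots> = p @ u @ drop q z @ u"
    unfolding p by simp
  finally have "drop q ?w = u @ drop q z @ u"
    using \<open>length p = q\<close> by (metis append_eq_conv_conj)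
  then have "take (length u) (drop q ?w) = u"
    by simp
  then have "card {0, q, length z + length u} \<le> occurrences u ?w"
    using assms(3) by (intro card_le_occurrences) auto
  moreover have "card {0, q, length z + length u} = 3"
    using assms(1-3) by (cases u) auto
  ultimately show ?thesis by simp
qed

lemma match_encode_avoids_zeros:
  assumes "u \<noteq> []" and "occurrences u (u @ z @ u) = 2"
  shows "\<not> sublist (replicate (length u) 0) (match_encode u u z)"
proof
  assume "sublist (replicate (length u) 0) (match_encode u u z)"
  then obtain a b where ab: "match_encode u u z = a @ replicate (length u) 0 @ b"
    unfolding sublist_def by blast
  let ?j = "length a"
  have fits: "?j + length u \<le> length z"
    using arg_cong[OF ab, of length] by simp
  have "match_encode u u z = match_encode u u (take ?j z) @ match_encode u (u @ take ?j z) (drop ?j z)"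
    by (metis match_encode_append append_take_drop_id)
  moreover have "length (match_encode u u (take ?j z)) = length a"
    using fits by simp
  ultimately have "match_encode u (u @ take ?j z) (drop ?j z) = replicate (length u) 0 @ b"
    using ab by (simp add: append_eq_append_conv)
  then obtain i where i: "1 \<le> i" "i \<le> length u" "suffix u ((u @ take ?j z) @ take i (drop ?j z))"
    using match_encode_zeros_imp_occurrence[OF assms(1)] by (metis prefixI)
  have "suffix u (u @ take (?j + i) z)"
    using i(3) by (simp add: take_add)
  with i fits have "3 \<le> occurrences u (u @ z @ u)"
    by (intro inner_occurrence_imp_occurrences_ge_3[OF assms(1)]) auto
  with assms(2) show False by simp
qed

lemma border_decomposition:
  assumes "prefix u w" and "suffix u w" and "2 * length u \<le> length w"
  obtains z where "w = u @ z @ u"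
proof -
  obtain r where r: "w = u @ r"
    using assms(1) prefix_def by blast
  obtain p where p: "w = p @ u"
    using assms(2) suffix_def by blast
  have "length u \<le> length p"
    using p assms(3) by simp
  with r p have "p = u @ drop (length u) p"
    by (metis append_eq_append_conv_if append_take_drop_id)
  with p show thesis
    by (metis append_assoc that)
qed

lemma finite_words: "finite (words k n)"
  unfolding words_def by (rule finite_subset[OF _ finite_lists_length_eq[of "{..<k}" n]]) auto

theorem lemma6:
  fixes n t k :: nat and u :: "nat list"
  assumes "n \<ge> 2 * t" and "2 * t \<ge> 2" and "k \<ge> 2"
    and "u \<in> words k t"
  shows "B k n u \<le> A k (n - 2 * t) (replicate t 0)"
proof -
  have u: "length u = t" "set u \<subseteq> {..<k}" and "u \<noteq> []"
    using assms(2,4) unfolding words_def by auto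
  define Z where "Z = {z \<in> words k (n - 2 * t). occurrences u (u @ z @ u) = 2}"
  have "{w \<in> words k n. closed_by w u} \<subseteq> (\<lambda>z. u @ z @ u) ` Z"
  proof
    fix w assume w: "w \<in> {w \<in> words k n. closed_by w u}"
    then have "prefix u w" "suffix u w" "occurrences u w = 2"
      unfolding closed_by_def is_border_def strict_prefix_def strict_suffix_def by auto
    with w u assms(1) obtain z where "w = u @ z @ u"
      by (elim border_decomposition) (auto simp: words_def)
    with w u \<open>occurrences u w = 2\<close> show "w \<in> (\<lambda>z. u @ z @ u) ` Z"
      unfolding Z_def words_def by auto
  qed
  moreover have "finite Z"
    unfolding Z_def using finite_words by simp
  ultimately have "B k n u \<le> card ((\<lambda>z. u @ z @ u) ` Z)"
    unfolding B_def by (intro card_mono finite_imageI)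
  also have "\<dots> \<le> card Z"
    by (rule card_image_le) fact
  also have "card Z \<le> A k (n - 2 * t) (replicate t 0)"
    unfolding A_def
  proof (rule card_inj_on_le[of "match_encode u u"])
    show "inj_on (match_encode u u) Z"
      by (rule inj_onI, rule match_encode_inj) (auto simp: Z_def words_def)
    show "match_encode u u ` Z \<subseteq> {w \<in> words k (n - 2 * t). \<not> sublist (replicate t 0) w}"
      using set_match_encode_subset[OF \<open>u \<noteq> []\<close> u(2)] match_encode_avoids_zeros[OF \<open>u \<noteq> []\<close>]
      by (auto simp: Z_def words_def u(1)[symmetric])
  qed (simp add: finite_words)
  finally show ?thesis .
qed

end
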